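(* Let $R,r>0$ and let $\mathcal{K}^*_{\partial\Omega}$ be the Neumann–Poincaré operator on $K^{-1/2}_0$ for the touching disks $\Omega=B_R\cup B_{-r}$, as described in the context. Then $\mathcal{K}^*_{\partial\Omega}$ has only absolutely continuous spectrum, and its spectrum is $[-1/2,1/2]$.
   Context: Identify $\mathbb{R}^2$ with $\mathbb{C}$; for $a\in\mathbb{R}\setminus\{0\}$ let $B_a$ be the open disk of radius $|a|$ centered at $(a,0)$. Fix $R,r>0$, let $\Omega=B_R\cup B_{-r}$, and put $q_1=\frac1{2r}+\frac1{2R}>0$. For $k\neq0$ let $\mathbb{S}(k)=\frac{1}{2|k|}\mathrm{diag}(1-e^{-|k|q_1},\,1+e^{-|k|q_1})$ and $\mathbb{K}(k)=\frac12e^{-|k|q_1}\mathrm{diag}(1,-1)$. $K^{-1/2}_0$ is the Hilbert space of pairs $\hat\varphi=(\hat\varphi_1,\hat\varphi_2)^T$ of measurable complex functions on $\mathbb{R}$ (mod a.e.) with $\int_{\mathbb{R}}\hat\varphi^T\mathbb{S}\overline{\hat\varphi}\,dk<\infty$, inner product $\langle\psi,\varphi\rangle_{-1/2}=\int_{\mathbb{R}}\hat\psi^T\mathbb{S}\overline{\hat\varphi}\,dk$. (In the paper such a pair represents a boundary density on $\partial\Omega$ via $\varphi=U^{-1}P\hat\varphi$, $P=\frac1{\sqrt2}\begin{bmatrix}-1&1\\1&1\end{bmatrix}$, $U$ the Fourier transform of the density pulled back by $z\mapsto1/z$.) The Neumann–Poincaré operator $\mathcal{K}^*_{\partial\Omega}$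 on $K^{-1/2}_0$ is the multiplication operator $\hat\varphi\mapsto\mathbb{K}\hat\varphi$. *)

theory Defs
  imports "HOL-Analysis.Analysis"
begin

text \<open>Elements of K^{-1/2}_0 are represented by pairs of complex functions on the real
line (k \<mapsto> (phi_1 k, phi_2 k)); the Hilbert space is the set of such representatives
modulo equality almost everywhere (relation np_eq).\<close>

type_synonym pairfun = "real \<Rightarrow> complex \<times> complex"

definition q1 :: "real \<Rightarrow> real \<Rightarrow> real" where
  "q1 R r = 1 / (2 * r) + 1 / (2 * R)"

text \<open>Diagonal entries of the weight matrix S(k) and of the symbol K(k).\<close>
definition S1 :: "real \<Rightarrow> real \<Rightarrow> real \<Rightarrow> real" where
  "S1 R r k = (1 - exp (- \<bar>k\<bar> * q1 R r)) / (2 * \<bar>k\<bar>)"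

definition S2 :: "real \<Rightarrow> real \<Rightarrow> real \<Rightarrow> real" where
  "S2 R r k = (1 + exp (- \<bar>k\<bar> * q1 R r)) / (2 * \<bar>k\<bar>)"

definition K1 :: "real \<Rightarrow> real \<Rightarrow> real \<Rightarrow> real" where
  "K1 R r k = exp (- \<bar>k\<bar> * q1 R r) / 2"

definition K2 :: "real \<Rightarrow> real \<Rightarrow> real \<Rightarrow> real" where
  "K2 R r k = - (exp (- \<bar>k\<bar> * q1 R r) / 2)"

definition ip_integrand :: "real \<Rightarrow> real \<Rightarrow> pairfun \<Rightarrow> pairfun \<Rightarrow> real \<Rightarrow> complex" where
  "ip_integrand R r \<psi> \<phi> k =
     complex_of_real (S1 R r k) * fst (\<psi> k) * cnj (fst (\<phi> k))
   + complex_of_real (S2 R r k) * snd (\<psi> k) * cnj (snd (\<phi> k))"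

definition Kspace :: "real \<Rightarrow> real \<Rightarrow> pairfun set" where
  "Kspace R r = {\<phi>. \<phi> \<in> borel_measurable lebesgue \<and>
     integrable lebesgue (\<lambda>k. S1 R r k * (cmod (fst (\<phi> k)))\<^sup>2 + S2 R r k * (cmod (snd (\<phi> k)))\<^sup>2)}"

definition np_ip :: "real \<Rightarrow> real \<Rightarrow> pairfun \<Rightarrow> pairfun \<Rightarrow> complex" where
  "np_ip R r \<psi> \<phi> = (\<integral>k. ip_integrand R r \<psi> \<phi> k \<partial>lebesgue)"

definition np_norm :: "real \<Rightarrow> real \<Rightarrow> pairfun \<Rightarrow> real" where
  "np_norm R r \<phi> = sqrt (\<integral>k. S1 R r k * (cmod (fst (\<phi> k)))\<^sup>2 + S2 R r k * (cmod (snd (\<phi> k)))\<^sup>2 \<partial>lebesgue)"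

definition np_eq :: "pairfun \<Rightarrow> pairfun \<Rightarrow> bool" where
  "np_eq \<phi> \<psi> \<longleftrightarrow> (AE k in lebesgue. \<phi> k = \<psi> k)"

definition NP_op :: "real \<Rightarrow> real \<Rightarrow> pairfun \<Rightarrow> pairfun" where
  "NP_op R r \<phi> = (\<lambda>k. (complex_of_real (K1 R r k) * fst (\<phi> k),
                        complex_of_real (K2 R r k) * snd (\<phi> k)))"

text \<open>Spectrum of NP_op: z is in the resolvent set iff NP_op - z is a bijection of the
Hilbert space with bounded inverse, i.e. it is bounded below and surjective.\<close>
definition NP_spectrum :: "real \<Rightarrow> real \<Rightarrow> complex set" where
  "NP_spectrum R r = {z. \<not> ((\<exists>c>0. \<forall>\<phi>\<in>Kspace R r.
        c * np_norm R r \<phi> \<le> np_norm R r (\<lambda>k. NP_op R r \<phi> k - (z * fst (\<phi> k), z * snd (\<phi> k))))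
     \<and> (\<forall>\<psi>\<in>Kspace R r. \<exists>\<phi>\<in>Kspace R r.
        np_eq (\<lambda>k. NP_op R r \<phi> k - (z * fst (\<phi> k), z * snd (\<phi> k))) \<psi>))}"

definition is_spectral_measure :: "real \<Rightarrow> real \<Rightarrow> pairfun \<Rightarrow> real measure \<Rightarrow> bool" where
  "is_spectral_measure R r \<phi> \<mu> \<longleftrightarrow> finite_measure \<mu> \<and> sets \<mu> = sets borel \<and>
     (\<forall>n::nat. integrable \<mu> (\<lambda>x. x ^ n) \<and>
        complex_of_real (\<integral>x. x ^ n \<partial>\<mu>) = np_ip R r ((NP_op R r ^^ n) \<phi>) \<phi>)"

definition NP_purely_ac :: "real \<Rightarrow> real \<Rightarrow> bool" where
  "NP_purely_ac R r \<longleftrightarrow> (\<forall>\<phi>\<in>Kspace R r.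
     (\<exists>\<mu>. is_spectral_measure R r \<phi> \<mu>) \<and>
     (\<forall>\<mu>. is_spectral_measure R r \<phi> \<mu> \<longrightarrow> absolutely_continuous lborel \<mu>))"

end

theory Submission
  imports Defs
begin

(* In the representation K^{-1/2}_0 of boundary densities, the Neumann-Poincare operator is
   multiplication by the diagonal symbol diag(K1, -K1) with K1(k) = exp(-|k| q1) / 2, which takes
   every value in (0, 1/2]. Its spectrum is therefore the closure [-1/2, 1/2] of the range of the
   symbol: away from it the inverse symbol is bounded, and at a point of it indicators of short
   intervals on which the symbol is almost constant are approximate eigenvectors.
   The spectral measure of a density phi is the sum of the push-forwards of the weights
   S_j |phi_j|^2 dk under the two symbols. Being supported in [-1/2, 1/2], it is the only measure
   with its moments, and it is absolutely continuous because K1 has a differentiable inverse on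
   each half-line, so preimages of Lebesgue null sets are null. *)

section \<open>Sums of measures\<close>

definition add_measure :: "'a measure \<Rightarrow> 'a measure \<Rightarrow> 'a measure" where
  "add_measure M N = measure_of (space M) (sets M) (\<lambda>A. emeasure M A + emeasure N A)"

context
  fixes M N :: "'a measure"
  assumes sets_N: "sets N = sets M"
begin

lemma sets_add_measure [simp, measurable_cong]: "sets (add_measure M N) = sets M"
  unfolding add_measure_def by (rule sets.sets_measure_of_eq)

lemma space_add_measure [simp]: "space (add_measure M N) = space M"
  using sets_eq_imp_space_eq[OF sets_add_measure] .

lemma emeasure_add_measure:
  assumes "A \<in> sets M"
  shows "emeasure (add_measure M N) A = emeasure M A + emeasure N A"
  unfolding add_measure_def
proof (rule emeasure_measure_of_sigma[OF sets.sigma_algebra_axioms _ _ assms])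
  show "positive (sets M) (\<lambda>A. emeasure M A + emeasure N A)"
    by (simp add: positive_def)
  show "countably_additive (sets M) (\<lambda>A. emeasure M A + emeasure N A)"
    unfolding countably_additive_def
  proof safe
    fix A :: "nat \<Rightarrow> 'a set"
    assume A: "range A \<subseteq> sets M" "disjoint_family A"
    have "(\<Sum>i. emeasure M (A i) + emeasure N (A i)) = (\<Sum>i. emeasure M (A i)) + (\<Sum>i. emeasure N (A i))"
      by (rule suminf_add[symmetric]) (auto intro: summableI)
    also have "\<dots> = emeasure M (\<Union>i. A i) + emeasure N (\<Union>i. A i)"
      using suminf_emeasure[OF A] suminf_emeasure[of A N] A sets_N by simp
    finally show "(\<Sum>i. emeasure M (A i) + emeasure N (A i)) = emeasure M (\<Union>i. A i) + emeasure N (\<Union>i. A i)" .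
  qed
qed

lemma finite_measure_add_measure:
  "finite_measure M \<Longrightarrow> finite_measure N \<Longrightarrow> finite_measure (add_measure M N)"
  using sets_N sets_eq_imp_space_eq[OF sets_N]
  by (intro finite_measureI) (simp add: emeasure_add_measure finite_measure.emeasure_finite)

lemma null_sets_add_measure: "null_sets (add_measure M N) = null_sets M \<inter> null_sets N"
proof -
  have "A \<in> null_sets (add_measure M N) \<longleftrightarrow> A \<in> null_sets M \<inter> null_sets N" for A
    using sets_N by (cases "A \<in> sets M") (simp_all add: null_sets_def emeasure_add_measure)
  then show ?thesis
    by blast
qed

lemma AE_add_measure:
  assumes "AE x in M. P x" "AE x in N. P x"
  shows "AE x in add_measure M N. P x"
proof -
  obtain A B where A: "A \<in> null_sets M" "{x \<in> space M. \<not> P x} \<subseteq> A"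
    and B: "B \<in> null_sets N" "{x \<in> space M. \<not> P x} \<subseteq> B"
    using assms sets_eq_imp_space_eq[OF sets_N] by (auto simp: eventually_ae_filter)
  have "A \<inter> B \<in> null_sets (add_measure M N)"
    using null_set_Int2[OF A(1)] null_set_Int1[OF B(1)] A(1) B(1) sets_N
    by (auto simp: null_sets_add_measure)
  with A(2) B(2) show ?thesis
    unfolding eventually_ae_filter by (intro bexI[of _ "A \<inter> B"]) auto
qed

lemma absolutely_continuous_add_measure:
  "absolutely_continuous L M \<Longrightarrow> absolutely_continuous L N \<Longrightarrow> absolutely_continuous L (add_measure M N)"
  by (auto simp: absolutely_continuous_def null_sets_add_measure)

lemma nn_integral_add_measure:
  assumes "f \<in> borel_measurable M"
  shows "integral\<^sup>N (add_measure M N) f = integral\<^sup>N M f + integral\<^sup>N N f"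
  using assms
proof (induction rule: borel_measurable_induct)
  case (cong f g)
  have "integral\<^sup>N K f = integral\<^sup>N K g" if "space K = space M" for K
    using cong that by (intro nn_integral_cong) simp
  then show ?case
    using cong sets_eq_imp_space_eq[OF sets_N] by simp
next
  case (set A)
  then show ?case
    using sets_N by (simp add: emeasure_add_measure)
next
  case (mult u c)
  have "u \<in> borel_measurable (add_measure M N)" "u \<in> borel_measurable N"
    using mult by (simp_all add: measurable_cong_sets[OF sets_N refl])
  with mult show ?case
    by (simp add: nn_integral_cmult distrib_left)
next
  case (add u v)
  have "u \<in> borel_measurable (add_measure M N)" "u \<in> borel_measurable N"
    "v \<in> borel_measurable (add_measure M N)" "v \<in> borel_measurable N"
    using add by (simp_all add: measurable_cong_sets[OF sets_N refl])
  with add show ?case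
    by (simp add: nn_integral_add add_ac)
next
  case (seq U)
  have inc: "incseq U"
    using seq by blast
  have U: "U i \<in> borel_measurable (add_measure M N)" "U i \<in> borel_measurable N" for i
    using seq by (simp_all add: measurable_cong_sets[OF sets_N refl])
  have mono: "incseq (\<lambda>i. integral\<^sup>N K (U i))" for K
    using inc by (auto simp: incseq_def le_fun_def intro!: nn_integral_mono)
  have "integral\<^sup>N (add_measure M N) (Sup (range U)) = (SUP i. integral\<^sup>N M (U i) + integral\<^sup>N N (U i))"
    using nn_integral_monotone_convergence_SUP[OF inc U(1)] seq(5)
    by (simp add: image_comp Sup_apply[abs_def])
  also have "\<dots> = (SUP i. integral\<^sup>N M (U i)) + (SUP i. integral\<^sup>N N (U i))"
    by (rule ennreal_SUP_add[OF mono mono])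
  also have "\<dots> = integral\<^sup>N M (Sup (range U)) + integral\<^sup>N N (Sup (range U))"
    using nn_integral_monotone_convergence_SUP[OF inc seq(1)]
      nn_integral_monotone_convergence_SUP[OF inc U(2)]
    by (simp add: image_comp Sup_apply[abs_def])
  finally show ?case .
qed

lemma
  fixes f :: "'a \<Rightarrow> real"
  assumes f: "integrable M f" "integrable N f"
  shows integrable_add_measure: "integrable (add_measure M N) f"
    and integral_add_measure: "integral\<^sup>L (add_measure M N) f = integral\<^sup>L M f + integral\<^sup>L N f"
proof -
  have [measurable]: "f \<in> borel_measurable M"
    using f(1) by auto
  have nn: "(\<integral>\<^sup>+ x. g (f x) \<partial>add_measure M N) = (\<integral>\<^sup>+ x. g (f x) \<partial>M) + (\<integral>\<^sup>+ x. g (f x) \<partial>N)"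
    if [measurable]: "g \<in> borel_measurable borel" for g :: "real \<Rightarrow> ennreal"
    by (rule nn_integral_add_measure) measurable
  show int: "integrable (add_measure M N) f"
    using f nn[of "\<lambda>y. ennreal (norm y)"]
    by (auto simp: integrable_iff_bounded measurable_cong_sets[OF sets_add_measure refl])
  have fin: "(\<integral>\<^sup>+ x. ennreal (g (f x)) \<partial>K) < \<infinity>"
    if "integrable K f" "\<And>y. g y \<le> norm y" for K g
    using that(1) unfolding integrable_iff_bounded
    by (elim conjE le_less_trans[rotated]) (intro nn_integral_mono ennreal_leI that(2))
  show "integral\<^sup>L (add_measure M N) f = integral\<^sup>L M f + integral\<^sup>L N f"
    using nn[of "\<lambda>y. ennreal y"] nn[of "\<lambda>y. ennreal (- y)"] int f
      fin[OF f(1), of "\<lambda>y. y"] fin[OF f(2), of "\<lambda>y. y"]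
      fin[OF f(1), of "\<lambda>y. - y"] fin[OF f(2), of "\<lambda>y. - y"]
    by (simp add: real_lebesgue_integral_def enn2real_plus)
qed

end

section \<open>Weighted measures and their push-forwards\<close>

context
  fixes M :: "'a measure" and w g :: "'a \<Rightarrow> real"
  assumes w_measurable [measurable]: "w \<in> borel_measurable M" and w_nonneg: "\<And>x. 0 \<le> w x"
    and g_measurable [measurable]: "g \<in> borel_measurable M"
begin

lemma finite_measure_distr_density:
  assumes "integrable M w"
  shows "finite_measure (distr (density M (\<lambda>x. ennreal (w x))) borel g)"
proof
  have "emeasure (density M (\<lambda>x. ennreal (w x))) (space M) = ennreal (integral\<^sup>L M w)"
    using assms w_nonneg by (simp add: emeasure_density nn_integral_eq_integral)
  then show "emeasure (distr (density M (\<lambda>x. ennreal (w x))) borel g)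
      (space (distr (density M (\<lambda>x. ennreal (w x))) borel g)) \<noteq> \<infinity>"
    by (simp add: emeasure_distr)
qed

lemma
  fixes f :: "real \<Rightarrow> real"
  assumes [measurable]: "f \<in> borel_measurable borel"
  shows integrable_distr_density_iff:
      "integrable (distr (density M (\<lambda>x. ennreal (w x))) borel g) f \<longleftrightarrow>
        integrable M (\<lambda>x. w x * f (g x))"
    and integral_distr_density:
      "integral\<^sup>L (distr (density M (\<lambda>x. ennreal (w x))) borel g) f = (\<integral>x. w x * f (g x) \<partial>M)"
proof -
  have g: "g \<in> density M (\<lambda>x. ennreal (w x)) \<rightarrow>\<^sub>M borel"
    by simp
  show "integrable (distr (density M (\<lambda>x. ennreal (w x))) borel g) f \<longleftrightarrow>
      integrable M (\<lambda>x. w x * f (g x))"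
    using w_nonneg by (simp add: integrable_distr_eq[OF g] integrable_density)
  show "integral\<^sup>L (distr (density M (\<lambda>x. ennreal (w x))) borel g) f = (\<integral>x. w x * f (g x) \<partial>M)"
    using w_nonneg by (simp add: integral_distr[OF g] integral_density)
qed

lemma AE_distr_density:
  assumes "\<And>x. P (g x)" "Measurable.pred borel P"
  shows "AE y in distr (density M (\<lambda>x. ennreal (w x))) borel g. P y"
  using assms by (subst AE_distr_iff) simp_all

end

lemma absolutely_continuous_distr_density:
  fixes w g :: "real \<Rightarrow> real"
  assumes [measurable]: "w \<in> borel_measurable lebesgue" "g \<in> borel_measurable lebesgue"
    and null_vimage: "\<And>N. N \<in> null_sets lborel \<Longrightarrow> g -` N \<in> null_sets lebesgue"
  shows "absolutely_continuous lborel (distr (density lebesgue (\<lambda>x. ennreal (w x))) borel g)"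
  unfolding absolutely_continuous_def
proof
  fix N :: "real set"
  assume N: "N \<in> null_sets lborel"
  then have "g -` N \<in> null_sets (density lebesgue (\<lambda>x. ennreal (w x)))"
    using null_vimage[OF N] by (subst null_sets_density_iff) (auto elim: AE_not_in[THEN eventually_mono])
  then show "N \<in> null_sets (distr (density lebesgue (\<lambda>x. ennreal (w x))) borel g)"
    using N by (auto simp: null_sets_def emeasure_distr)
qed

lemma integral_indicator_pos:
  fixes f :: "real \<Rightarrow> real"
  assumes "a < b" "continuous_on {a..b} f" "\<And>x. x \<in> {a..b} \<Longrightarrow> 0 < f x"
  shows "0 < (\<integral>x. indicator {a..b} x * f x \<partial>lebesgue)"
proof -
  obtain x0 where x0: "x0 \<in> {a..b}" "\<And>x. x \<in> {a..b} \<Longrightarrow> f x0 \<le> f x"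
    using continuous_attains_inf[OF compact_Icc _ assms(2)] assms(1) by auto
  have "integrable lebesgue (\<lambda>x. indicator {a..b} x * f x)"
    using absolutely_integrable_continuous_real[OF assms(2)] by (simp add: set_integrable_def)
  moreover have "integrable lebesgue (\<lambda>x. f x0 * indicator {a..b} x)"
    using absolutely_integrable_continuous_real[of a b "\<lambda>_. f x0"]
    by (simp add: set_integrable_def mult.commute)
  ultimately have "(\<integral>x. f x0 * indicator {a..b} x \<partial>lebesgue) \<le> (\<integral>x. indicator {a..b} x * f x \<partial>lebesgue)"
    using x0(2) by (intro integral_mono) (auto simp: indicator_def)
  moreover have "(\<integral>x. f x0 * indicator {a..b} x \<partial>lebesgue) = f x0 * (b - a)"
    using integral_completion[of "\<lambda>x. f x0 * indicator {a..b} x" lborel] assms(1) by simp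
  moreover have "0 < f x0 * (b - a)"
    using assms(1,3) x0(1) by simp
  ultimately show ?thesis
    by linarith
qed

section \<open>Determinacy of the moment problem for compactly supported measures\<close>

lemma AE_le_if_AE_less:
  fixes f :: "'a \<Rightarrow> real"
  assumes "\<And>t. a < t \<Longrightarrow> AE x in M. f x < t"
  shows "AE x in M. f x \<le> a"
proof -
  have "AE x in M. \<forall>m. f x < a + 1 / Suc m"
    using assms by (simp add: AE_all_countable)
  then show ?thesis
  proof (rule eventually_mono)
    fix x
    assume x: "\<forall>m. f x < a + 1 / Suc m"
    show "f x \<le> a"
    proof (rule field_le_epsilon)
      fix e :: real
      assume "0 < e"
      then obtain m where "1 / Suc m < e"
        using nat_approx_posE by blast
      with x show "f x \<le> a + e"
        by (metis add_le_cancel_left less_eq_real_def order_less_le_trans)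
    qed
  qed
qed

lemma AE_abs_le_if_even_moments_bounded:
  fixes \<mu> :: "real measure"
  assumes fin: "finite_measure \<mu>" and sets: "sets \<mu> = sets borel" and "0 \<le> a"
    and int: "\<And>n. integrable \<mu> (\<lambda>x. x ^ (2 * n))"
    and mom: "\<And>n. (\<integral>x. x ^ (2 * n) \<partial>\<mu>) \<le> C * a ^ (2 * n)"
  shows "AE x in \<mu>. \<bar>x\<bar> \<le> a"
proof (rule AE_le_if_AE_less)
  fix t
  assume t: "a < t"
  let ?A = "{x. t \<le> \<bar>x\<bar>}"
  have space: "space \<mu> = UNIV"
    using sets_eq_imp_space_eq[OF sets] by simp
  have A: "?A \<in> sets \<mu>"
    unfolding sets by measurable
  have "measure \<mu> ?A \<le> C * (a / t) ^ (2 * n)" for n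
  proof -
    have "t ^ (2 * n) \<le> x ^ (2 * n)" if "t \<le> \<bar>x\<bar>" for x
      using power_mono[OF that, of "2 * n"] t \<open>0 \<le> a\<close> by (simp add: power_even_abs)
    then have "measure \<mu> ?A \<le> measure \<mu> {x \<in> space \<mu>. t ^ (2 * n) \<le> x ^ (2 * n)}"
      using fin by (intro finite_measure.finite_measure_mono) (auto simp: space sets)
    also have "\<dots> \<le> (\<integral>x. x ^ (2 * n) \<partial>\<mu>) / t ^ (2 * n)"
      using int t \<open>0 \<le> a\<close> by (intro integral_Markov_inequality_measure[OF _ sets.top]) auto
    also have "\<dots> \<le> C * a ^ (2 * n) / t ^ (2 * n)"
      using t \<open>0 \<le> a\<close> by (intro divide_right_mono mom) simp
    finally show ?thesis
      by (simp add: power_divide)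
  qed
  moreover have "(\<lambda>n. C * ((a / t)\<^sup>2) ^ n) \<longlonglongrightarrow> C * 0"
    using t \<open>0 \<le> a\<close> by (intro tendsto_mult_left LIMSEQ_power_zero) (simp add: power_less_one_iff)
  ultimately have "measure \<mu> ?A \<le> 0"
    by (intro LIMSEQ_le_const) (auto simp: power_mult)
  then have "?A \<in> null_sets \<mu>"
    using A fin measure_nonneg[of \<mu> ?A] by (simp add: finite_measure.emeasure_eq_measure null_sets_def)
  then show "AE x in \<mu>. \<bar>x\<bar> < t"
    by (rule AE_I') auto
qed

lemma abs_integral_diff_le:
  fixes f g :: "'a \<Rightarrow> real"
  assumes "finite_measure M" "integrable M f" "integrable M g" "AE x in M. \<bar>f x - g x\<bar> \<le> e"
  shows "\<bar>(\<integral>x. f x \<partial>M) - (\<integral>x. g x \<partial>M)\<bar> \<le> e * measure M (space M)"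
proof -
  have "\<bar>(\<integral>x. f x \<partial>M) - (\<integral>x. g x \<partial>M)\<bar> = \<bar>\<integral>x. f x - g x \<partial>M\<bar>"
    using assms by simp
  also have "\<dots> \<le> (\<integral>x. \<bar>f x - g x\<bar> \<partial>M)"
    by (rule integral_abs_bound)
  also have "\<dots> \<le> (\<integral>x. e \<partial>M)"
    using assms by (intro integral_mono_AE finite_measure.integrable_const) auto
  finally show ?thesis
    by (simp add: mult.commute)
qed

lemma ramp_tendsto_indicator:
  fixes a x :: real
  shows "(\<lambda>n. max 0 (min 1 (real (Suc n) * (x - a)))) \<longlonglongrightarrow> indicator {a<..} x"
proof (cases "a < x")
  case True
  then obtain N where N: "1 / Suc N < x - a"
    using nat_approx_posE[of "x - a"] by auto
  have "max 0 (min 1 (real (Suc n) * (x - a))) = indicator {a<..} x" if "N \<le> n" for n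
  proof -
    have "1 < real (Suc N) * (x - a)"
      using N by (simp add: field_simps)
    also have "\<dots> \<le> real (Suc n) * (x - a)"
      using that True by (intro mult_right_mono) auto
    finally show ?thesis
      using True by simp
  qed
  then show ?thesis
    by (intro tendsto_eventually) (auto simp: eventually_sequentially)
next
  case False
  then have "max 0 (min 1 (real (Suc n) * (x - a))) = 0" for n
    using mult_nonneg_nonpos[of "real (Suc n)" "x - a"] by simp
  with False show ?thesis
    by simp
qed

lemma measure_eq_if_continuous_integrals_eq:
  fixes \<mu> \<nu> :: "real measure"
  assumes fin: "finite_measure \<mu>" "finite_measure \<nu>"
    and sets: "sets \<mu> = sets borel" "sets \<nu> = sets borel"
    and eq: "\<And>f :: real \<Rightarrow> real. continuous_on UNIV f \<Longrightarrow> (\<And>x. \<bar>f x\<bar> \<le> 1) \<Longrightarrow>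
      (\<integral>x. f x \<partial>\<mu>) = (\<integral>x. f x \<partial>\<nu>)"
  shows "\<mu> = \<nu>"
proof (rule measure_eqI_lessThan[OF sets])
  fix a :: real
  show "emeasure \<mu> {a<..} < \<infinity>"
    using finite_measure.emeasure_finite[OF fin(1)] by (simp add: less_top[symmetric])
  define s where "s n x = max 0 (min 1 (real (Suc n) * (x - a)))" for n x
  have s_cont: "continuous_on UNIV (s n)" and s_bound: "\<bar>s n x\<bar> \<le> 1" for n x
    unfolding s_def by (auto intro!: continuous_intros)
  have lim: "(\<lambda>n. \<integral>x. s n x \<partial>M) \<longlonglongrightarrow> measure M {a<..}"
    if "finite_measure M" "sets M = sets borel" for M
  proof -
    have "(\<lambda>n. \<integral>x. s n x \<partial>M) \<longlonglongrightarrow> (\<integral>x. indicator {a<..} x \<partial>M)"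
      using that ramp_tendsto_indicator s_bound unfolding s_def
      by (intro integral_dominated_convergence[where w="\<lambda>_. 1"] finite_measure.integrable_const)
        (auto simp: measurable_cong_sets[OF that(2) refl])
    then show ?thesis
      using sets_eq_imp_space_eq[OF that(2)] by simp
  qed
  have "(\<integral>x. s n x \<partial>\<mu>) = (\<integral>x. s n x \<partial>\<nu>)" for n
    using s_cont s_bound by (rule eq)
  then have "(\<lambda>n. \<integral>x. s n x \<partial>\<nu>) \<longlonglongrightarrow> measure \<mu> {a<..}"
    using lim[OF fin(1) sets(1)] by simp
  then have "measure \<mu> {a<..} = measure \<nu> {a<..}"
    using lim[OF fin(2) sets(2)] by (rule LIMSEQ_unique)
  then show "emeasure \<mu> {a<..} = emeasure \<nu> {a<..}"
    using fin by (simp add: finite_measure.emeasure_eq_measure)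
qed

locale equal_moments =
  fixes \<mu> \<nu> :: "real measure" and a :: real
  assumes finite: "finite_measure \<mu>" "finite_measure \<nu>"
    and sets: "sets \<mu> = sets borel" "sets \<nu> = sets borel"
    and concentrated: "AE x in \<mu>. \<bar>x\<bar> \<le> a" "AE x in \<nu>. \<bar>x\<bar> \<le> a"
    and integrable_power: "\<And>n. integrable \<mu> (\<lambda>x. x ^ n)" "\<And>n. integrable \<nu> (\<lambda>x. x ^ n)"
    and moments: "\<And>n. (\<integral>x. x ^ n \<partial>\<mu>) = (\<integral>x. x ^ n \<partial>\<nu>)"
begin

lemma integral_polynomial_eq: "(\<integral>x. (\<Sum>i\<le>N. c i * x ^ i) \<partial>\<mu>) = (\<integral>x. (\<Sum>i\<le>N. c i * x ^ i) \<partial>\<nu>)"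
  using integrable_power moments by (simp add: Bochner_Integration.integral_sum)

lemma abs_integral_diff_le_if_close_to_polynomial:
  fixes f :: "real \<Rightarrow> real"
  assumes f: "f \<in> borel_measurable borel" "\<And>x. \<bar>f x\<bar> \<le> B"
    and close: "\<And>x. \<bar>x\<bar> \<le> a \<Longrightarrow> \<bar>f x - (\<Sum>i\<le>N. c i * x ^ i)\<bar> \<le> e"
  shows "\<bar>(\<integral>x. f x \<partial>\<mu>) - (\<integral>x. f x \<partial>\<nu>)\<bar> \<le> e * (measure \<mu> (space \<mu>) + measure \<nu> (space \<nu>))"
proof -
  have approx: "\<bar>(\<integral>x. f x \<partial>M) - (\<integral>x. (\<Sum>i\<le>N. c i * x ^ i) \<partial>M)\<bar> \<le> e * measure M (space M)"
    if "finite_measure M" "sets M = sets borel" "AE x in M. \<bar>x\<bar> \<le> a"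
      "\<And>n. integrable M (\<lambda>x. x ^ n)" for M
  proof (rule abs_integral_diff_le)
    show "integrable M f"
      using that f by (intro finite_measure.integrable_const_bound[where B=B])
        (auto simp: measurable_cong_sets[OF that(2) refl])
    show "integrable M (\<lambda>x. \<Sum>i\<le>N. c i * x ^ i)"
      using that(4) by simp
    show "AE x in M. \<bar>f x - (\<Sum>i\<le>N. c i * x ^ i)\<bar> \<le> e"
      using that(3) close by (rule eventually_mono)
  qed fact
  show ?thesis
    using approx[OF finite(1) sets(1) concentrated(1) integrable_power(1)]
      approx[OF finite(2) sets(2) concentrated(2) integrable_power(2)] integral_polynomial_eq
    by (simp add: distrib_left)
qed

lemma integral_continuous_eq:
  fixes f :: "real \<Rightarrow> real"
  assumes f: "continuous_on UNIV f" "\<And>x. \<bar>f x\<bar> \<le> B"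
  shows "(\<integral>x. f x \<partial>\<mu>) = (\<integral>x. f x \<partial>\<nu>)"
proof -
  define D where "D = measure \<mu> (space \<mu>) + measure \<nu> (space \<nu>)"
  have "0 \<le> D"
    by (simp add: D_def)
  have "\<bar>(\<integral>x. f x \<partial>\<mu>) - (\<integral>x. f x \<partial>\<nu>)\<bar> \<le> e" if "0 < e" for e
  proof -
    obtain g where "real_polynomial_function g" and g: "\<And>x. x \<in> {-a..a} \<Longrightarrow> \<bar>f x - g x\<bar> < e / (D + 1)"
      using Stone_Weierstrass_real_polynomial_function[of "{-a..a}" f "e / (D + 1)"]
        \<open>0 < e\<close> \<open>0 \<le> D\<close> continuous_on_subset[OF f(1)] by auto
    then obtain c N where g_eq: "g = (\<lambda>x. \<Sum>i\<le>N. c i * x ^ i)"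
      using real_polynomial_function_iff_sum by blast
    have "\<bar>f x - g x\<bar> \<le> e / (D + 1)" if "\<bar>x\<bar> \<le> a" for x
      using that by (intro less_imp_le g) (auto simp: abs_le_iff)
    then have "\<bar>(\<integral>x. f x \<partial>\<mu>) - (\<integral>x. f x \<partial>\<nu>)\<bar> \<le> e / (D + 1) * D"
      unfolding D_def using f borel_measurable_continuous_onI[OF f(1)]
      by (intro abs_integral_diff_le_if_close_to_polynomial) (simp_all add: g_eq)
    also have "\<dots> \<le> e"
      using \<open>0 < e\<close> \<open>0 \<le> D\<close> by (simp add: field_simps)
    finally show ?thesis .
  qed
  then show ?thesis
    using field_le_epsilon[of "\<bar>(\<integral>x. f x \<partial>\<mu>) - (\<integral>x. f x \<partial>\<nu>)\<bar>" 0] by simp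
qed

lemma measure_eq: "\<mu> = \<nu>"
  using finite sets integral_continuous_eq by (rule measure_eq_if_continuous_integrals_eq)

end

lemma measure_eq_if_moments_eq:
  fixes \<mu> \<nu> :: "real measure"
  assumes fin: "finite_measure \<mu>" "finite_measure \<nu>"
    and sets: "sets \<mu> = sets borel" "sets \<nu> = sets borel"
    and conc: "AE x in \<nu>. \<bar>x\<bar> \<le> a"
    and int: "\<And>n. integrable \<mu> (\<lambda>x. x ^ n)" "\<And>n. integrable \<nu> (\<lambda>x. x ^ n)"
    and mom: "\<And>n. (\<integral>x. x ^ n \<partial>\<mu>) = (\<integral>x. x ^ n \<partial>\<nu>)"
  shows "\<mu> = \<nu>"
proof -
  have conc': "AE x in \<nu>. \<bar>x\<bar> \<le> \<bar>a\<bar>"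
    using conc by eventually_elim auto
  have "x ^ (2 * n) \<le> \<bar>a\<bar> ^ (2 * n)" if "\<bar>x\<bar> \<le> \<bar>a\<bar>" for x :: real and n
    using power_mono[OF that abs_ge_zero, of "2 * n"] by (simp add: power_even_abs)
  then have "(\<integral>x. x ^ (2 * n) \<partial>\<nu>) \<le> (\<integral>x. \<bar>a\<bar> ^ (2 * n) \<partial>\<nu>)" for n
    using conc' int(2) fin(2)
    by (intro integral_mono_AE finite_measure.integrable_const) (auto elim: eventually_mono)
  then have "(\<integral>x. x ^ (2 * n) \<partial>\<mu>) \<le> measure \<nu> (space \<nu>) * \<bar>a\<bar> ^ (2 * n)" for n
    using mom by (simp add: mult.commute)
  then have "AE x in \<mu>. \<bar>x\<bar> \<le> \<bar>a\<bar>"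
    by (rule AE_abs_le_if_even_moments_bounded[OF fin(1) sets(1) abs_ge_zero int(1)])
  then show ?thesis
    by (rule equal_moments.measure_eq[OF equal_moments.intro[OF fin sets _ conc' int mom]])
qed

section \<open>The Neumann--Poincare operator as a diagonal multiplier\<close>

lemma q1_pos: "0 < R \<Longrightarrow> 0 < r \<Longrightarrow> 0 < q1 R r"
  unfolding q1_def by (simp add: add_pos_pos)

lemma K2_eq_minus_K1: "K2 R r k = - K1 R r k"
  by (simp add: K1_def K2_def)

lemma K1_pos: "0 < K1 R r k"
  by (simp add: K1_def)

lemma continuous_on_K1: "continuous_on A (K1 R r)"
  unfolding K1_def[abs_def] by (intro continuous_intros) auto

lemma S1_le_S2: "S1 R r k \<le> S2 R r k"
  by (simp add: S1_def S2_def divide_right_mono)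

lemma borel_measurable_S_K [measurable]:
  "S1 R r \<in> borel_measurable borel" "S2 R r \<in> borel_measurable borel"
  "K1 R r \<in> borel_measurable borel" "K2 R r \<in> borel_measurable borel"
  unfolding S1_def S2_def K1_def K2_def by measurable

lemma lebesgue_measurable_S_K [measurable]:
  "S1 R r \<in> borel_measurable lebesgue" "S2 R r \<in> borel_measurable lebesgue"
  "K1 R r \<in> borel_measurable lebesgue" "K2 R r \<in> borel_measurable lebesgue"
  by (auto intro!: measurable_completion)

lemma borel_measurable_fst_pair [measurable (raw)]:
  "\<phi> \<in> borel_measurable M \<Longrightarrow> (\<lambda>x. fst (\<phi> x :: complex \<times> complex)) \<in> borel_measurable M"
  by (rule borel_measurable_continuous_on[OF continuous_on_fst[OF continuous_on_id]])

lemma borel_measurable_snd_pair [measurable (raw)]: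
  "\<phi> \<in> borel_measurable M \<Longrightarrow> (\<lambda>x. snd (\<phi> x :: complex \<times> complex)) \<in> borel_measurable M"
  by (rule borel_measurable_continuous_on[OF continuous_on_snd[OF continuous_on_id]])

definition diag_mult :: "(real \<Rightarrow> complex) \<Rightarrow> (real \<Rightarrow> complex) \<Rightarrow> pairfun \<Rightarrow> pairfun" where
  "diag_mult a b \<phi> = (\<lambda>k. (a k * fst (\<phi> k), b k * snd (\<phi> k)))"

lemma diag_mult_diag_mult:
  "diag_mult a b (diag_mult c d \<phi>) = diag_mult (\<lambda>k. a k * c k) (\<lambda>k. b k * d k) \<phi>"
  by (simp add: diag_mult_def mult.assoc)

lemma NP_op_eq_diag_mult:
  "NP_op R r = diag_mult (\<lambda>k. of_real (K1 R r k)) (\<lambda>k. of_real (K2 R r k))"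
  by (simp add: fun_eq_iff NP_op_def diag_mult_def)

lemma NP_op_minus_scalar:
  "(\<lambda>k. NP_op R r \<phi> k - (z * fst (\<phi> k), z * snd (\<phi> k)))
     = diag_mult (\<lambda>k. of_real (K1 R r k) - z) (\<lambda>k. of_real (K2 R r k) - z) \<phi>"
  by (simp add: fun_eq_iff NP_op_def diag_mult_def algebra_simps)

lemma funpow_NP_op:
  "(NP_op R r ^^ n) \<phi> = diag_mult (\<lambda>k. of_real (K1 R r k ^ n)) (\<lambda>k. of_real (K2 R r k ^ n)) \<phi>"
  by (induction n) (simp_all add: NP_op_eq_diag_mult diag_mult_diag_mult, simp add: diag_mult_def)

definition np_weight1 :: "real \<Rightarrow> real \<Rightarrow> pairfun \<Rightarrow> real \<Rightarrow> real" where
  "np_weight1 R r \<phi> k = S1 R r k * (cmod (fst (\<phi> k)))\<^sup>2"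

definition np_weight2 :: "real \<Rightarrow> real \<Rightarrow> pairfun \<Rightarrow> real \<Rightarrow> real" where
  "np_weight2 R r \<phi> k = S2 R r k * (cmod (snd (\<phi> k)))\<^sup>2"

definition np_norm_integrand :: "real \<Rightarrow> real \<Rightarrow> pairfun \<Rightarrow> real \<Rightarrow> real" where
  "np_norm_integrand R r \<phi> k = np_weight1 R r \<phi> k + np_weight2 R r \<phi> k"

lemma Kspace_iff:
  "\<phi> \<in> Kspace R r \<longleftrightarrow> \<phi> \<in> borel_measurable lebesgue \<and> integrable lebesgue (np_norm_integrand R r \<phi>)"
  by (simp add: Kspace_def np_norm_integrand_def[abs_def] np_weight1_def np_weight2_def)

lemma np_norm_eq: "np_norm R r \<phi> = sqrt (integral\<^sup>L lebesgue (np_norm_integrand R r \<phi>))"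
  by (simp add: np_norm_def np_norm_integrand_def[abs_def] np_weight1_def np_weight2_def)

lemma ip_integrand_funpow_NP_op:
  "ip_integrand R r ((NP_op R r ^^ n) \<phi>) \<phi> =
     (\<lambda>k. of_real (np_weight1 R r \<phi> k * K1 R r k ^ n + np_weight2 R r \<phi> k * K2 R r k ^ n))"
  by (simp add: fun_eq_iff ip_integrand_def funpow_NP_op diag_mult_def np_weight1_def np_weight2_def
      mult.assoc complex_norm_square[symmetric] mult.left_commute)

definition np_spectral_measure :: "real \<Rightarrow> real \<Rightarrow> pairfun \<Rightarrow> real measure" where
  "np_spectral_measure R r \<phi> =
     add_measure (distr (density lebesgue (\<lambda>k. ennreal (np_weight1 R r \<phi> k))) borel (K1 R r))
                 (distr (density lebesgue (\<lambda>k. ennreal (np_weight2 R r \<phi> k))) borel (K2 R r))"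

lemma sets_np_spectral_measure [simp]: "sets (np_spectral_measure R r \<phi>) = sets borel"
  by (simp add: np_spectral_measure_def)

context
  fixes R r :: real
  assumes q1: "0 < q1 R r"
begin

lemma K1_le_half: "K1 R r k \<le> 1/2"
  using q1 by (simp add: K1_def)

lemma abs_K_le_half: "\<bar>K1 R r k\<bar> \<le> 1/2" "\<bar>K2 R r k\<bar> \<le> 1/2"
  using K1_pos[of R r k] K1_le_half[of k] by (simp_all add: K2_eq_minus_K1)

lemma S1_nonneg: "0 \<le> S1 R r k"
  using q1 by (simp add: S1_def zero_le_mult_iff)

lemma S1_pos: "k \<noteq> 0 \<Longrightarrow> 0 < S1 R r k"
  using q1 by (simp add: S1_def)

lemma S2_nonneg: "0 \<le> S2 R r k"
  using S1_nonneg S1_le_S2 by (rule order_trans)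

lemma np_weights_nonneg: "0 \<le> np_weight1 R r \<phi> k" "0 \<le> np_weight2 R r \<phi> k"
  using S1_nonneg S2_nonneg by (simp_all add: np_weight1_def np_weight2_def)

lemma np_norm_integrand_nonneg: "0 \<le> np_norm_integrand R r \<phi> k"
  unfolding np_norm_integrand_def using np_weights_nonneg by simp

lemma np_norm_integrand_diag_mult_le:
  assumes "cmod (a k) \<le> C" "cmod (b k) \<le> C"
  shows "np_norm_integrand R r (diag_mult a b \<phi>) k \<le> C\<^sup>2 * np_norm_integrand R r \<phi> k"
proof -
  have "(cmod (a k * fst (\<phi> k)))\<^sup>2 \<le> C\<^sup>2 * (cmod (fst (\<phi> k)))\<^sup>2"
    "(cmod (b k * snd (\<phi> k)))\<^sup>2 \<le> C\<^sup>2 * (cmod (snd (\<phi> k)))\<^sup>2"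
    using assms by (simp_all add: norm_mult power_mult_distrib mult_right_mono power_mono)
  then show ?thesis
    unfolding np_norm_integrand_def np_weight1_def np_weight2_def diag_mult_def
    using S1_nonneg S2_nonneg by (simp add: distrib_left mult.left_commute add_mono mult_left_mono)
qed

lemma np_norm_integrand_diag_mult_ge:
  assumes "0 \<le> c" "c \<le> cmod (a k)" "c \<le> cmod (b k)"
  shows "c\<^sup>2 * np_norm_integrand R r \<phi> k \<le> np_norm_integrand R r (diag_mult a b \<phi>) k"
proof -
  have "c\<^sup>2 * (cmod (fst (\<phi> k)))\<^sup>2 \<le> (cmod (a k * fst (\<phi> k)))\<^sup>2"
    "c\<^sup>2 * (cmod (snd (\<phi> k)))\<^sup>2 \<le> (cmod (b k * snd (\<phi> k)))\<^sup>2"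
    using assms by (simp_all add: norm_mult power_mult_distrib mult_right_mono power_mono)
  then show ?thesis
    unfolding np_norm_integrand_def np_weight1_def np_weight2_def diag_mult_def
    using S1_nonneg S2_nonneg by (simp add: distrib_left mult.left_commute add_mono mult_left_mono)
qed

context
  fixes a b :: "real \<Rightarrow> complex" and C :: real and \<phi> :: pairfun
  assumes \<phi>: "\<phi> \<in> Kspace R r"
    and measurable_a_b [measurable]: "a \<in> borel_measurable lebesgue" "b \<in> borel_measurable lebesgue"
    and bounded_a_b: "\<And>k. cmod (a k) \<le> C" "\<And>k. cmod (b k) \<le> C"
begin

lemma diag_mult_in_Kspace: "diag_mult a b \<phi> \<in> Kspace R r"
proof -
  have [measurable]: "\<phi> \<in> borel_measurable lebesgue"
    using \<phi> by (simp add: Kspace_iff)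
  have m: "diag_mult a b \<phi> \<in> borel_measurable lebesgue"
    unfolding diag_mult_def by measurable
  have "integrable lebesgue (np_norm_integrand R r (diag_mult a b \<phi>))"
  proof (rule Bochner_Integration.integrable_bound)
    show "integrable lebesgue (\<lambda>k. C\<^sup>2 * np_norm_integrand R r \<phi> k)"
      using \<phi> by (simp add: Kspace_iff)
    show "np_norm_integrand R r (diag_mult a b \<phi>) \<in> borel_measurable lebesgue"
      unfolding np_norm_integrand_def[abs_def] np_weight1_def np_weight2_def using m by measurable
    show "AE k in lebesgue. norm (np_norm_integrand R r (diag_mult a b \<phi>) k)
        \<le> norm (C\<^sup>2 * np_norm_integrand R r \<phi> k)"
      using np_norm_integrand_diag_mult_le[OF bounded_a_b] np_norm_integrand_nonneg
      by (intro AE_I2) (simp add: abs_of_nonneg)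
  qed
  with m show ?thesis
    by (simp add: Kspace_iff)
qed

lemma np_norm_diag_mult_le: "np_norm R r (diag_mult a b \<phi>) \<le> C * np_norm R r \<phi>"
proof -
  have "0 \<le> C"
    using bounded_a_b(1)[of 0] norm_ge_zero order_trans by blast
  have "integral\<^sup>L lebesgue (np_norm_integrand R r (diag_mult a b \<phi>))
      \<le> integral\<^sup>L lebesgue (\<lambda>k. C\<^sup>2 * np_norm_integrand R r \<phi> k)"
    using diag_mult_in_Kspace \<phi> np_norm_integrand_diag_mult_le[OF bounded_a_b]
    by (intro integral_mono) (simp_all add: Kspace_iff)
  from real_sqrt_le_mono[OF this] show ?thesis
    using \<open>0 \<le> C\<close> by (simp add: np_norm_eq real_sqrt_mult)
qed

lemma np_norm_diag_mult_ge:
  assumes "0 \<le> c" "\<And>k. c \<le> cmod (a k)" "\<And>k. c \<le> cmod (b k)"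
  shows "c * np_norm R r \<phi> \<le> np_norm R r (diag_mult a b \<phi>)"
proof -
  have "integral\<^sup>L lebesgue (\<lambda>k. c\<^sup>2 * np_norm_integrand R r \<phi> k)
      \<le> integral\<^sup>L lebesgue (np_norm_integrand R r (diag_mult a b \<phi>))"
    using diag_mult_in_Kspace \<phi> np_norm_integrand_diag_mult_ge[OF assms]
    by (intro integral_mono) (simp_all add: Kspace_iff)
  from real_sqrt_le_mono[OF this] show ?thesis
    using \<open>0 \<le> c\<close> by (simp add: np_norm_eq real_sqrt_mult)
qed

end

section \<open>The spectrum\<close>

lemma notin_NP_spectrum:
  assumes z: "z \<notin> complex_of_real ` {-1/2..1/2}"
  shows "z \<notin> NP_spectrum R r"
proof -
  have "closed (complex_of_real ` {-1/2..1/2})"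
    by (intro compact_imp_closed compact_continuous_image continuous_intros) auto
  from separate_point_closed[OF this z] obtain c
    where c: "0 < c" "\<And>x. x \<in> {-1/2..1/2} \<Longrightarrow> c \<le> cmod (complex_of_real x - z)"
    by (auto simp: dist_norm norm_minus_commute)
  define a where "a k = complex_of_real (K1 R r k) - z" for k
  define b where "b k = complex_of_real (K2 R r k) - z" for k
  have meas [measurable]: "a \<in> borel_measurable lebesgue" "b \<in> borel_measurable lebesgue"
    unfolding a_def[abs_def] b_def[abs_def] by measurable
  have ge: "c \<le> cmod (a k)" "c \<le> cmod (b k)" for k
    unfolding a_def b_def using abs_K_le_half[of k] by (auto intro!: c(2) simp: abs_le_iff)
  have le: "cmod (a k) \<le> 1/2 + cmod z" "cmod (b k) \<le> 1/2 + cmod z" for k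
    using abs_K_le_half[of k] norm_triangle_ineq4[of "complex_of_real (K1 R r k)" z]
      norm_triangle_ineq4[of "complex_of_real (K2 R r k)" z]
    unfolding a_def b_def norm_of_real by linarith+
  have inv_le: "cmod (inverse (a k)) \<le> inverse c" "cmod (inverse (b k)) \<le> inverse c" for k
    using le_imp_inverse_le[OF ge(1) c(1)] le_imp_inverse_le[OF ge(2) c(1)] by (simp_all add: norm_inverse)
  have bounded_below: "c * np_norm R r \<phi> \<le> np_norm R r (diag_mult a b \<phi>)" if "\<phi> \<in> Kspace R r" for \<phi>
    using np_norm_diag_mult_ge[OF that meas le less_imp_le[OF c(1)] ge] .
  have right_inverse: "diag_mult a b (diag_mult (\<lambda>k. inverse (a k)) (\<lambda>k. inverse (b k)) \<psi>) = \<psi>" for \<psi>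
  proof -
    have "a k \<noteq> 0" "b k \<noteq> 0" for k
      using ge[of k] c(1) by auto
    then show ?thesis
      unfolding diag_mult_diag_mult by (simp add: diag_mult_def)
  qed
  have surjective: "\<exists>\<phi>\<in>Kspace R r. np_eq (diag_mult a b \<phi>) \<psi>" if "\<psi> \<in> Kspace R r" for \<psi>
  proof
    show "diag_mult (\<lambda>k. inverse (a k)) (\<lambda>k. inverse (b k)) \<psi> \<in> Kspace R r"
      using diag_mult_in_Kspace[OF that _ _ inv_le] by measurable
  qed (simp add: right_inverse np_eq_def)
  show ?thesis
    unfolding NP_spectrum_def mem_Collect_eq NP_op_minus_scalar a_def[symmetric] b_def[symmetric]
    using bounded_below surjective c(1) by auto
qed

lemma K1_interval_approx:
  assumes "0 \<le> s" "s \<le> 1/2" "0 < e"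
  obtains a b where "0 < a" "a < b" "\<And>k. k \<in> {a..b} \<Longrightarrow> \<bar>K1 R r k - s\<bar> \<le> e"
proof -
  \<comment> \<open>\<open>K1\<close> maps \<open>[0, \<infinity>)\<close> onto \<open>(0, 1/2]\<close>; the value \<open>s'\<close> lies in that range\<close>
  define s' where "s' = max s (min (e/2) (1/2))"
  have s': "0 < s'" "s' \<le> 1/2" "\<bar>s' - s\<bar> \<le> e/2"
    using assms by (auto simp: s'_def)
  define k0 where "k0 = ln (1 / (2 * s')) / q1 R r"
  have "0 \<le> k0"
    using s' q1 by (simp add: k0_def)
  have "K1 R r k0 = s'"
    using s' q1 \<open>0 \<le> k0\<close> by (simp add: K1_def k0_def exp_minus)
  obtain d where d: "0 < d" "\<And>k. dist k k0 < d \<Longrightarrow> dist (K1 R r k) (K1 R r k0) < e/2"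
    using continuous_on_K1[of UNIV R r, unfolded continuous_on_iff, rule_format, of k0 "e/2"] \<open>0 < e\<close>
    by auto
  show ?thesis
  proof
    show "0 < k0 + d/3" "k0 + d/3 < k0 + 2*d/3"
      using \<open>0 \<le> k0\<close> d(1) by auto
    fix k
    assume "k \<in> {k0 + d/3..k0 + 2*d/3}"
    then have "dist (K1 R r k) s' < e/2"
      using d \<open>K1 R r k0 = s'\<close> by (auto simp: dist_real_def)
    with s'(3) show "\<bar>K1 R r k - s\<bar> \<le> e"
      unfolding dist_real_def by arith
  qed
qed

definition interval_vector :: "bool \<Rightarrow> real \<Rightarrow> real \<Rightarrow> pairfun" where
  "interval_vector first a b k =
     (if first then (of_real (indicator {a..b} k), 0) else (0, of_real (indicator {a..b} k)))"

lemma
  assumes "0 < a" "a < b"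
  shows interval_vector_in_Kspace: "interval_vector first a b \<in> Kspace R r"
    and np_norm_interval_vector_pos: "0 < np_norm R r (interval_vector first a b)"
proof -
  define S where "S k = (if first then S1 R r k else S2 R r k)" for k
  have integrand: "np_norm_integrand R r (interval_vector first a b) = (\<lambda>k. indicator {a..b} k * S k)"
    by (simp add: fun_eq_iff np_norm_integrand_def np_weight1_def np_weight2_def interval_vector_def
        S_def indicator_def)
  have "continuous_on {a..b} (S1 R r)" "continuous_on {a..b} (S2 R r)"
    using assms(1) unfolding S1_def[abs_def] S2_def[abs_def] by (auto intro!: continuous_intros)
  then have S_cont: "continuous_on {a..b} S"
    unfolding S_def[abs_def] by (cases first) simp_all
  have "interval_vector first a b \<in> borel_measurable borel"
    unfolding interval_vector_def[abs_def] by (cases first; measurable)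
  then show "interval_vector first a b \<in> Kspace R r"
    using absolutely_integrable_continuous_real[OF S_cont]
    by (simp add: Kspace_iff integrand set_integrable_def measurable_completion)
  have "0 < S k" if "k \<in> {a..b}" for k
    using S1_pos[of k] S1_le_S2[of R r k] that assms(1) by (auto simp: S_def)
  then have "0 < (\<integral>k. indicator {a..b} k * S k \<partial>lebesgue)"
    using assms(2) S_cont by (intro integral_indicator_pos)
  then show "0 < np_norm R r (interval_vector first a b)"
    by (simp add: np_norm_eq integrand)
qed

lemma approximate_eigenvector:
  assumes t: "t \<in> {-1/2..1/2}" and e: "0 < e"
  obtains \<phi> where "\<phi> \<in> Kspace R r" "0 < np_norm R r \<phi>"
    "np_norm R r (\<lambda>k. NP_op R r \<phi> k - (of_real t * fst (\<phi> k), of_real t * snd (\<phi> k)))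
       \<le> e * np_norm R r \<phi>"
proof -
  have "\<bar>t\<bar> \<le> 1/2"
    using t by auto
  then obtain a b where ab: "0 < a" "a < b" "\<And>k. k \<in> {a..b} \<Longrightarrow> \<bar>K1 R r k - \<bar>t\<bar>\<bar> \<le> e"
    using K1_interval_approx[OF abs_ge_zero _ e] by blast
  \<comment> \<open>The symbol is \<open>K1\<close> on the first component and \<open>-K1\<close> on the second, so the test vector
    lives in the first component if \<open>t \<ge> 0\<close> and in the second otherwise.\<close>
  define \<phi> where "\<phi> = interval_vector (0 \<le> t) a b"
  define m where "m k = complex_of_real (indicator {a..b} k * (K1 R r k - \<bar>t\<bar>))" for k
  have "m \<in> borel_measurable borel"
    unfolding m_def[abs_def] by measurable
  then have [measurable]: "m \<in> borel_measurable lebesgue"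
    by (auto intro: measurable_completion)
  have "(\<lambda>k. NP_op R r \<phi> k - (of_real t * fst (\<phi> k), of_real t * snd (\<phi> k)))
      = diag_mult m (\<lambda>k. - m k) \<phi>"
    unfolding NP_op_minus_scalar
    by (auto simp: fun_eq_iff diag_mult_def \<phi>_def interval_vector_def m_def K2_eq_minus_K1 indicator_def)
  moreover have "cmod (m k) \<le> e" "cmod (- m k) \<le> e" for k
    using ab(3)[of k] e by (auto simp: m_def indicator_def simp del: of_real_diff)
  moreover have "\<phi> \<in> Kspace R r" "0 < np_norm R r \<phi>"
    unfolding \<phi>_def using ab(1,2) by (rule interval_vector_in_Kspace, rule np_norm_interval_vector_pos)
  ultimately show thesis
    using np_norm_diag_mult_le[OF \<open>\<phi> \<in> Kspace R r\<close>] by (intro that) auto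
qed

lemma of_real_in_NP_spectrum:
  assumes t: "t \<in> {-1/2..1/2}"
  shows "complex_of_real t \<in> NP_spectrum R r"
proof -
  have False if c: "0 < c" and bounded_below: "\<forall>\<phi>\<in>Kspace R r. c * np_norm R r \<phi> \<le>
      np_norm R r (\<lambda>k. NP_op R r \<phi> k - (of_real t * fst (\<phi> k), of_real t * snd (\<phi> k)))" for c
  proof -
    obtain \<phi> where \<phi>: "\<phi> \<in> Kspace R r" "0 < np_norm R r \<phi>"
      "np_norm R r (\<lambda>k. NP_op R r \<phi> k - (of_real t * fst (\<phi> k), of_real t * snd (\<phi> k)))
         \<le> c / 2 * np_norm R r \<phi>"
      using approximate_eigenvector[OF t, of "c / 2"] c by auto
    with bounded_below have "c * np_norm R r \<phi> \<le> c / 2 * np_norm R r \<phi>"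
      by (meson order_trans)
    then have "c \<le> c / 2"
      using \<phi>(2) by (rule mult_right_le_imp_le)
    with c show False
      by simp
  qed
  then show ?thesis
    unfolding NP_spectrum_def mem_Collect_eq by blast
qed

lemma NP_spectrum_eq: "NP_spectrum R r = complex_of_real ` {-1/2..1/2}"
  using of_real_in_NP_spectrum notin_NP_spectrum by auto

section \<open>Spectral measures\<close>

lemma negligible_vimage_K1:
  assumes N: "negligible N"
  shows "negligible (K1 R r -` N)"
proof -
  define h where "h y = ln (1 / (2 * y)) / q1 R r" for y
  have "h differentiable (at y)" if "0 < y" for y
  proof -
    have "(h has_real_derivative inverse (1 / (2 * y)) * (- 2 / (2 * y)\<^sup>2) / q1 R r) (at y)"
      unfolding h_def[abs_def] using that q1
      by (auto intro!: derivative_eq_intros simp: power2_eq_square)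
    then show ?thesis
      by (rule differentiableI[OF has_field_derivative_imp_has_derivative])
  qed
  then have "h differentiable_on N \<inter> {0<..}" "(\<lambda>y. - h y) differentiable_on N \<inter> {0<..}"
    by (auto intro!: differentiable_at_imp_differentiable_on differentiable_on_minus)
  moreover have "negligible (N \<inter> {0<..})"
    using N by (rule negligible_subset) auto
  ultimately have "negligible (h ` (N \<inter> {0<..}) \<union> (\<lambda>y. - h y) ` (N \<inter> {0<..}))"
    by (intro negligible_Un negligible_differentiable_image_negligible[OF order_refl])
  moreover have "K1 R r -` N \<subseteq> h ` (N \<inter> {0<..}) \<union> (\<lambda>y. - h y) ` (N \<inter> {0<..})"
  proof
    fix k
    assume k: "k \<in> K1 R r -` N"
    have "1 / (2 * K1 R r k) = exp (\<bar>k\<bar> * q1 R r)"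
      by (simp add: K1_def exp_minus inverse_eq_divide)
    then have "h (K1 R r k) = \<bar>k\<bar>"
      using q1 by (simp add: h_def)
    moreover have "K1 R r k \<in> N \<inter> {0<..}"
      using k K1_pos by auto
    ultimately show "k \<in> h ` (N \<inter> {0<..}) \<union> (\<lambda>y. - h y) ` (N \<inter> {0<..})"
      by (cases "0 \<le> k") (auto intro!: image_eqI[where x = "K1 R r k"])
  qed
  ultimately show ?thesis
    by (rule negligible_subset)
qed

lemma null_sets_vimage_K:
  assumes N: "N \<in> null_sets lborel"
  shows "K1 R r -` N \<in> null_sets lebesgue" "K2 R r -` N \<in> null_sets lebesgue"
proof -
  have "negligible N"
    using null_sets_completionI[OF N] by (simp add: negligible_iff_null_sets)
  then have "negligible (uminus ` N)"
    by (intro negligible_differentiable_image_negligible[OF order_refl]) auto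
  then have "negligible (uminus -` N)"
    by (rule negligible_subset) (auto intro: image_eqI[where x = "- x" for x])
  then have "negligible (K2 R r -` N)"
    using negligible_vimage_K1[of "uminus -` N"] by (simp add: K2_eq_minus_K1 vimage_def)
  then show "K1 R r -` N \<in> null_sets lebesgue" "K2 R r -` N \<in> null_sets lebesgue"
    using negligible_vimage_K1[OF \<open>negligible N\<close>] by (simp_all add: negligible_iff_null_sets)
qed

context
  fixes \<phi> :: pairfun
  assumes \<phi>: "\<phi> \<in> Kspace R r"
begin

lemma np_weights_measurable [measurable]:
  "np_weight1 R r \<phi> \<in> borel_measurable lebesgue" "np_weight2 R r \<phi> \<in> borel_measurable lebesgue"
proof -
  have [measurable]: "\<phi> \<in> borel_measurable lebesgue"
    using \<phi> by (simp add: Kspace_iff)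
  show "np_weight1 R r \<phi> \<in> borel_measurable lebesgue" "np_weight2 R r \<phi> \<in> borel_measurable lebesgue"
    unfolding np_weight1_def[abs_def] np_weight2_def[abs_def] by measurable
qed

lemma integrable_np_weights:
  "integrable lebesgue (np_weight1 R r \<phi>)" "integrable lebesgue (np_weight2 R r \<phi>)"
  using \<phi> np_weights_nonneg unfolding Kspace_iff
  by (auto intro!: Bochner_Integration.integrable_bound[where f = "np_norm_integrand R r \<phi>"] AE_I2
      simp: np_norm_integrand_def)

lemma finite_measure_np_spectral_measure: "finite_measure (np_spectral_measure R r \<phi>)"
  unfolding np_spectral_measure_def
  by (intro finite_measure_add_measure finite_measure_distr_density integrable_np_weights
      np_weights_nonneg) simp_all

lemma
  shows integrable_np_spectral_measure_power: "integrable (np_spectral_measure R r \<phi>) (\<lambda>x. x ^ n)"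
    and integral_np_spectral_measure_power:
      "complex_of_real (\<integral>x. x ^ n \<partial>np_spectral_measure R r \<phi>) = np_ip R r ((NP_op R r ^^ n) \<phi>) \<phi>"
proof -
  have weighted_power: "integrable lebesgue (\<lambda>k. w k * g k ^ n)"
    if "integrable lebesgue w" "\<And>k. 0 \<le> w k" "g \<in> borel_measurable lebesgue" "\<And>k. \<bar>g k\<bar> \<le> 1/2"
    for w g :: "real \<Rightarrow> real"
  proof (rule Bochner_Integration.integrable_bound[OF that(1)])
    show "(\<lambda>k. w k * g k ^ n) \<in> borel_measurable lebesgue"
      using that(1,3) by measurable
    have "\<bar>g k ^ n\<bar> \<le> 1" for k
      using that(4)[of k] by (simp add: power_abs power_le_one)
    then show "AE k in lebesgue. norm (w k * g k ^ n) \<le> norm (w k)"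
      using that(2) by (intro AE_I2) (simp add: abs_mult mult_left_le)
  qed
  have int: "integrable lebesgue (\<lambda>k. np_weight1 R r \<phi> k * K1 R r k ^ n)"
    "integrable lebesgue (\<lambda>k. np_weight2 R r \<phi> k * K2 R r k ^ n)"
    using integrable_np_weights np_weights_nonneg abs_K_le_half
    by (auto intro!: weighted_power)
  then show "integrable (np_spectral_measure R r \<phi>) (\<lambda>x. x ^ n)"
    unfolding np_spectral_measure_def
    by (simp add: integrable_add_measure integrable_distr_density_iff np_weights_nonneg)
  have "np_ip R r ((NP_op R r ^^ n) \<phi>) \<phi> = complex_of_real
      (\<integral>k. np_weight1 R r \<phi> k * K1 R r k ^ n + np_weight2 R r \<phi> k * K2 R r k ^ n \<partial>lebesgue)"
    unfolding np_ip_def ip_integrand_funpow_NP_op by (rule integral_complex_of_real)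
  also have "(\<integral>k. np_weight1 R r \<phi> k * K1 R r k ^ n + np_weight2 R r \<phi> k * K2 R r k ^ n \<partial>lebesgue)
      = (\<integral>x. x ^ n \<partial>np_spectral_measure R r \<phi>)"
    using int unfolding np_spectral_measure_def
    by (simp add: integrable_add_measure integral_add_measure integrable_distr_density_iff
        integral_distr_density np_weights_nonneg)
  finally show "complex_of_real (\<integral>x. x ^ n \<partial>np_spectral_measure R r \<phi>) = np_ip R r ((NP_op R r ^^ n) \<phi>) \<phi>"
    by (rule sym)
qed

lemma is_spectral_measure_np_spectral_measure: "is_spectral_measure R r \<phi> (np_spectral_measure R r \<phi>)"
  unfolding is_spectral_measure_def
  using finite_measure_np_spectral_measure integrable_np_spectral_measure_power
    integral_np_spectral_measure_power by simp

lemma AE_np_spectral_measure: "AE x in np_spectral_measure R r \<phi>. \<bar>x\<bar> \<le> 1/2"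
  unfolding np_spectral_measure_def
  using abs_K_le_half by (intro AE_add_measure AE_distr_density np_weights_nonneg) simp_all

lemma is_spectral_measure_eq_np_spectral_measure:
  assumes "is_spectral_measure R r \<phi> \<mu>"
  shows "\<mu> = np_spectral_measure R r \<phi>"
proof -
  have "complex_of_real (\<integral>x. x ^ n \<partial>\<mu>) = complex_of_real (\<integral>x. x ^ n \<partial>np_spectral_measure R r \<phi>)" for n
    using assms integral_np_spectral_measure_power by (simp add: is_spectral_measure_def)
  then show ?thesis
    using assms integrable_np_spectral_measure_power
    by (intro measure_eq_if_moments_eq[OF _ finite_measure_np_spectral_measure _ _ AE_np_spectral_measure])
      (auto simp: is_spectral_measure_def)
qed

lemma absolutely_continuous_np_spectral_measure:
  "absolutely_continuous lborel (np_spectral_measure R r \<phi>)"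
  unfolding np_spectral_measure_def
  by (intro absolutely_continuous_add_measure absolutely_continuous_distr_density null_sets_vimage_K)
    simp_all

end

lemma NP_purely_ac: "NP_purely_ac R r"
  unfolding NP_purely_ac_def
  using is_spectral_measure_np_spectral_measure is_spectral_measure_eq_np_spectral_measure
    absolutely_continuous_np_spectral_measure by metis

end

theorem theorem4p6:
  fixes R r :: real
  assumes "R > 0" and "r > 0"
  shows "NP_purely_ac R r \<and> NP_spectrum R r = complex_of_real ` {-1/2..1/2}"
  using NP_purely_ac[OF q1_pos[OF assms]] NP_spectrum_eq[OF q1_pos[OF assms]] by simp

end
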